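(* (a) For $V=\mathbb F_2\mathbb Z_4$ with basis $x^0,x^1,x^2,x^3$ and $x^\mu\circ x^\nu=x^{\mu+\nu \bmod 4}$, the associated calculus on $\mathbb F_2[x^0,\dots,x^3]$ has exactly $8$ quantum metrics: the four metrics $g_m=\sum_\mu\mathrm dx^\mu\otimes\mathrm dx^{m-\mu}$ ($m=0,1,2,3$, indices mod 4) and the four metrics $g_m+c\otimes c$, where $c=\sum_\mu\mathrm dx^\mu$ (i.e. with all coefficients complemented $0\leftrightarrow1$). (b) For $V=A_2=\mathbb F_2[X]/\langle X^4-X\rangle$ with basis $x^\mu=X^\mu$, $\mu=0,1,2,3$ (so $x^0$ is the unit and $x^\mu\circ x^\nu=x^{\mu+\nu}$ if $\mu+\nu<4$, reduced using $x^4=x^1$ otherwise), the associated calculus on $\mathbb F_2[x^0,\dots,x^3]$ has exactly $3$ quantum metrics.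
   Context: Standing setup. Work over $\mathbb F_2$. Let $(V,\circ)$ be a commutative associative algebra over $\mathbb F_2$ with basis $x^1,\dots,x^n$ and structure constants $x^\mu\circ x^\nu=\sum_\rho V^{\mu\nu}{}_\rho x^\rho$. Let $A=\mathbb F_2[x^1,\dots,x^n]$ be the polynomial algebra on the same symbols. The associated differential calculus is the $A$-bimodule $\Omega^1$ which is free as a left $A$-module on $\mathrm dx^1,\dots,\mathrm dx^n$, with right action determined by $\mathrm dx^\mu\, x^\nu=x^\nu\,\mathrm dx^\mu+\sum_\rho V^{\mu\nu}{}_\rho\,\mathrm dx^\rho$, together with the unique map $\mathrm d:A\to\Omega^1$ satisfying the Leibniz rule, $\mathrm d(x^\mu)=\mathrm dx^\mu$, $\mathrm d1=0$. The bimodule $\Omega^1\otimes_A\Omega^1$ is free as a left module on $\mathrm dx^\mu\otimes\mathrm dx^\nu$. A quantum metric is $g=\sum_{\mu,\nu}g_{\mu\nu}\mathrm dx^\mu\otimes\mathrm dx^\nu$ with constants $g_{\mu\nu}\in\mathbb F_2$, $g_{\mu\nu}=g_{\nu\mu}$, the matrix $(g_{\mu\nu})$ invertible, and $g$ central: $x^\rho g=g x^\rho$ for all $\rho$. (Here the basis is indexed $0,\dots,3$; superscripts are labels, not exponents.) *)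

theory Defs
  imports Main "HOL-Library.Z2" "HOL-Library.Poly_Mapping"
begin

text \<open>The polynomial algebra
  A = F_2[x^0,...,x^(n-1)] is modelled by finitely supported maps from monomials
  (exponent vectors, finitely supported nat to nat) to coefficients (the usual Poly_Mapping
  representation of multivariate polynomials, with convolution product).\<close>

type_synonym F2 = bit
type_synonym polyA = "(nat \<Rightarrow>\<^sub>0 nat) \<Rightarrow>\<^sub>0 F2"

text \<open>Structure constants of (V,o): x^mu o x^nu = sum_rho V mu nu rho x^rho.\<close>
type_synonym structconst = "nat \<Rightarrow> nat \<Rightarrow> nat \<Rightarrow> F2"

definition varA :: "nat \<Rightarrow> polyA" where
  "varA r = Poly_Mapping.single (Poly_Mapping.single r 1) 1"

definition constA :: "F2 \<Rightarrow> polyA" where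
  "constA c = Poly_Mapping.single 0 c"

text \<open>Elements of Omega^1 (free left A-module on dx^0..dx^(n-1)) are given by
  coefficient functions w, meaning sum_{mu<n} w mu dx^mu.
  Elements of Omega^1 \<otimes>_A Omega^1 (free left A-module on dx^mu \<otimes> dx^nu) are given
  by coefficient functions T, meaning sum_{mu,nu<n} T mu nu dx^mu \<otimes> dx^nu.\<close>
type_synonym omega1 = "nat \<Rightarrow> polyA"
type_synonym omega2 = "nat \<Rightarrow> nat \<Rightarrow> polyA"

definition dxA :: "nat \<Rightarrow> omega1" where
  "dxA m = (\<lambda>k. if k = m then 1 else 0)"

text \<open>Right action of the generator x^r on Omega^1, from the defining relation
  (a dx^mu) x^r = a x^r dx^mu + sum_sigma a V^{mu r}_sigma dx^sigma.\<close>
definition rmul1 :: "nat \<Rightarrow> structconst \<Rightarrow> nat \<Rightarrow> omega1 \<Rightarrow> omega1" where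
  "rmul1 n V r w = (\<lambda>s. varA r * w s + (\<Sum>m<n. w m * constA (V m r s)))"

text \<open>Right action of x^r on Omega^1 \<otimes>_A Omega^1 (bimodule tensor product):
  (a dx^mu \<otimes> dx^nu) x^r = a dx^mu \<otimes> (dx^nu x^r)
     = a dx^mu \<otimes> (x^r dx^nu) + sum_sigma a V^{nu r}_sigma dx^mu \<otimes> dx^sigma
     = a (dx^mu x^r) \<otimes> dx^nu + sum_sigma a V^{nu r}_sigma dx^mu \<otimes> dx^sigma.\<close>
definition rmul2 :: "nat \<Rightarrow> structconst \<Rightarrow> nat \<Rightarrow> omega2 \<Rightarrow> omega2" where
  "rmul2 n V r T =
     (\<lambda>m s. \<Sum>p<n. \<Sum>q<n. T p q *
        ((if s = q then rmul1 n V r (dxA p) m else 0)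
         + (if m = p then constA (V q r s) else 0)))"

definition lmul2 :: "nat \<Rightarrow> omega2 \<Rightarrow> omega2" where
  "lmul2 r T = (\<lambda>m s. varA r * T m s)"

text \<open>A quantum metric: constant coefficients g_{mu nu} in F_2 (indices < n;
  g is zero outside that range so that it is a single well-defined object),
  symmetric, invertible, and central: x^r g = g x^r for all r < n.\<close>
definition quantum_metric :: "nat \<Rightarrow> structconst \<Rightarrow> (nat \<Rightarrow> nat \<Rightarrow> F2) \<Rightarrow> bool" where
  "quantum_metric n V g \<longleftrightarrow>
     (\<forall>i j. (n \<le> i \<or> n \<le> j) \<longrightarrow> g i j = 0)
   \<and> (\<forall>i j. g i j = g j i)
   \<and> (\<exists>h :: nat \<Rightarrow> nat \<Rightarrow> F2. \<forall>i<n. \<forall>j<n.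
        (\<Sum>k<n. g i k * h k j) = (if i = j then 1 else 0)
      \<and> (\<Sum>k<n. h i k * g k j) = (if i = j then 1 else 0))
   \<and> (\<forall>r<n. \<forall>i<n. \<forall>j<n.
        lmul2 r (\<lambda>a b. constA (g a b)) i j = rmul2 n V r (\<lambda>a b. constA (g a b)) i j)"

definition VZ4 :: structconst where
  "VZ4 m k r = (if m < 4 \<and> k < 4 \<and> r = (m + k) mod 4 then 1 else 0)"

text \<open>(b) A_2 = F_2[X]/(X^4 - X), x^mu = X^mu: x^mu o x^nu = x^{mu+nu} if
  mu+nu < 4, otherwise reduced with x^4 = x^1, i.e. x^{mu+nu-3}.\<close>
definition VA2 :: structconst where
  "VA2 m k r = (if m < 4 \<and> k < 4 \<and>
                   r = (if m + k < 4 then m + k else m + k - 3) then 1 else 0)"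

definition gZ4 :: "nat \<Rightarrow> nat \<Rightarrow> nat \<Rightarrow> F2" where
  "gZ4 m i j = (if i < 4 \<and> j < 4 \<and> (i + j) mod 4 = m then 1 else 0)"

definition gZ4c :: "nat \<Rightarrow> nat \<Rightarrow> nat \<Rightarrow> F2" where
  "gZ4c m i j = (if i < 4 \<and> j < 4 then gZ4 m i j + 1 else 0)"

end

(*
  For a constant metric g, the products x^r g and g x^r differ only by the constant terms
  produced when x^r is moved past the dx's, so centrality is the linear condition
  sum_p g_pj V^pr_i = sum_q g_iq V^qr_j (signs do not matter in characteristic 2).

  For F_2 Z_4 the condition says g_{i-r, j} = g_{i, j-r}, so g_ij depends only on i + j mod 4:
  g is anticirculant with first row f, and every such matrix is central.  If f has even weight,
  all row sums vanish and the all-ones vector lies in the kernel; so f has weight 1 or 3, which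
  gives exactly g_m and its complement, and these are involutions, hence invertible.

  For A_2 the condition cuts the symmetric matrices down to a four-parameter family
  (metricA2).  Of its 16 members, the 13 singular ones have e_0, the all-ones vector or
  e_1 + e_2 in their kernel; the remaining 3 have explicit inverses.
*)
theory Submission
  imports Defs
begin

(* The default simpset turns + and * on bit into XOR and AND; keep the field operations. *)
declare add_bit_eq_xor [simp del] mult_bit_eq_and [simp del]

lemma bit_add_eq_0_iff: "(a::bit) + b = 0 \<longleftrightarrow> a = b"
  by (metis minus_bit_def right_minus_eq)

lemma bit_zero_or_one: "(x::bit) = 0 \<or> x = 1"
  by (cases "x = 0") simp_all

lemma constA_0 [simp]: "constA 0 = 0"
  by (simp add: constA_def)

lemma constA_add: "constA (a + b) = constA a + constA b"
  by (simp only: constA_def single_add)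

lemma constA_mult: "constA (a * b) = constA a * constA b"
  by (simp only: constA_def mult_single add_0)

lemma constA_sum: "constA (\<Sum>x\<in>A. f x) = (\<Sum>x\<in>A. constA (f x))"
  by (induction A rule: infinite_finite_induct) (simp_all add: constA_add)

lemma constA_eq_0_iff [simp]: "constA a = 0 \<longleftrightarrow> a = 0"
  unfolding constA_def by (metis inj_single injD single_zero)

lemma rmul1_dxA:
  "p < n \<Longrightarrow> rmul1 n V r (dxA p) m = varA r * (if m = p then 1 else 0) + constA (V p r m)"
  by (simp add: rmul1_def dxA_def if_distrib[where f="\<lambda>x. x * y" for y] cong: if_cong)

lemma rmul2_constant:
  assumes "i < n" "j < n"
  shows "rmul2 n V r (\<lambda>a b. constA (g a b)) i j
       = varA r * constA (g i j) + constA ((\<Sum>p<n. g p j * V p r i) + (\<Sum>q<n. g i q * V q r j))"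
proof -
  have "rmul2 n V r (\<lambda>a b. constA (g a b)) i j =
     (\<Sum>p<n. constA (g p j) * rmul1 n V r (dxA p) i) + (\<Sum>q<n. constA (g i q) * constA (V q r j))"
    unfolding rmul2_def
    by (simp add: distrib_left sum.distrib assms if_distrib[where f="\<lambda>x. y * x" for y]
        sum.swap[where A="{..<n}"] cong: if_cong)
  also have "\<dots> = (\<Sum>p<n. constA (g p j) * (varA r * (if i = p then 1 else 0)))
      + constA ((\<Sum>p<n. g p j * V p r i) + (\<Sum>q<n. g i q * V q r j))"
    by (simp add: rmul1_dxA distrib_left sum.distrib constA_add constA_sum constA_mult add.assoc)
  also have "(\<Sum>p<n. constA (g p j) * (varA r * (if i = p then 1 else 0))) = varA r * constA (g i j)"
    by (simp add: assms if_distrib[where f="\<lambda>x. y * x" for y] mult.commute cong: if_cong)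
  finally show ?thesis .
qed

lemma lmul2_eq_rmul2_constant_iff:
  assumes "i < n" "j < n"
  shows "lmul2 r (\<lambda>a b. constA (g a b)) i j = rmul2 n V r (\<lambda>a b. constA (g a b)) i j
     \<longleftrightarrow> (\<Sum>p<n. g p j * V p r i) = (\<Sum>q<n. g i q * V q r j)"
  by (simp add: rmul2_constant assms lmul2_def bit_add_eq_0_iff)

lemma quantum_metricI:
  assumes "\<And>i j. n \<le> i \<or> n \<le> j \<Longrightarrow> g i j = 0"
    and "\<And>i j. g i j = g j i"
    and "\<And>i j. i < n \<Longrightarrow> j < n \<Longrightarrow> (\<Sum>k<n. g i k * h k j) = (if i = j then 1 else 0)"
    and "\<And>i j. i < n \<Longrightarrow> j < n \<Longrightarrow> (\<Sum>k<n. h i k * g k j) = (if i = j then 1 else 0)"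
    and "\<And>r i j. r < n \<Longrightarrow> i < n \<Longrightarrow> j < n \<Longrightarrow>
           (\<Sum>p<n. g p j * V p r i) = (\<Sum>q<n. g i q * V q r j)"
  shows "quantum_metric n V g"
proof -
  have "\<forall>r<n. \<forall>i<n. \<forall>j<n. lmul2 r (\<lambda>a b. constA (g a b)) i j = rmul2 n V r (\<lambda>a b. constA (g a b)) i j"
    using assms(5) by (simp add: lmul2_eq_rmul2_constant_iff)
  moreover have "\<exists>h. \<forall>i<n. \<forall>j<n. (\<Sum>k<n. g i k * h k j) = (if i = j then 1 else 0)
      \<and> (\<Sum>k<n. h i k * g k j) = (if i = j then 1 else 0)"
    using assms(3,4) by blast
  ultimately show ?thesis
    unfolding quantum_metric_def using assms(1,2) by blast
qed

lemma quantum_metric_central: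
  assumes "quantum_metric n V g" "r < n" "i < n" "j < n"
  shows "(\<Sum>p<n. g p j * V p r i) = (\<Sum>q<n. g i q * V q r j)"
proof -
  from assms(1) have "\<forall>r<n. \<forall>i<n. \<forall>j<n.
      lmul2 r (\<lambda>a b. constA (g a b)) i j = rmul2 n V r (\<lambda>a b. constA (g a b)) i j"
    unfolding quantum_metric_def by (elim conjE)
  then show ?thesis
    using assms(2-4) lmul2_eq_rmul2_constant_iff by blast
qed

lemma left_inverse_imp_kernel_trivial:
  fixes g h :: "nat \<Rightarrow> nat \<Rightarrow> 'a::comm_semiring_1"
  assumes inverse: "\<And>i j. i < n \<Longrightarrow> j < n \<Longrightarrow> (\<Sum>k<n. h i k * g k j) = (if i = j then 1 else 0)"
    and kernel: "\<And>k. k < n \<Longrightarrow> (\<Sum>j<n. g k j * v j) = 0" and "i < n"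
  shows "v i = 0"
proof -
  have "v i = (\<Sum>j<n. if i = j then v j else 0)"
    using \<open>i < n\<close> by simp
  also have "\<dots> = (\<Sum>j<n. (if i = j then 1 else 0) * v j)"
    by (intro sum.cong) simp_all
  also have "\<dots> = (\<Sum>j<n. (\<Sum>k<n. h i k * g k j) * v j)"
    using \<open>i < n\<close> by (simp add: inverse)
  also have "\<dots> = (\<Sum>j<n. \<Sum>k<n. h i k * (g k j * v j))"
    by (simp add: sum_distrib_right mult.assoc)
  also have "\<dots> = (\<Sum>k<n. \<Sum>j<n. h i k * (g k j * v j))"
    by (rule sum.swap)
  also have "\<dots> = (\<Sum>k<n. h i k * (\<Sum>j<n. g k j * v j))"
    by (simp add: sum_distrib_left)
  also have "\<dots> = 0"
    by (simp add: kernel)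
  finally show ?thesis .
qed

lemma quantum_metric_kernel_trivial:
  assumes "quantum_metric n V g" "\<And>k. k < n \<Longrightarrow> (\<Sum>j<n. g k j * v j) = 0" "i < n"
  shows "v i = 0"
proof -
  from assms(1) obtain h where "\<forall>i<n. \<forall>j<n. (\<Sum>k<n. g i k * h k j) = (if i = j then 1 else 0)
      \<and> (\<Sum>k<n. h i k * g k j) = (if i = j then 1 else 0)"
    unfolding quantum_metric_def by (elim conjE exE)
  then have "\<And>i j. i < n \<Longrightarrow> j < n \<Longrightarrow> (\<Sum>k<n. h i k * g k j) = (if i = j then 1 else 0)"
    by simp
  then show ?thesis
    using assms(2,3) by (rule left_inverse_imp_kernel_trivial)
qed

lemma quantum_metric_symmetric: "quantum_metric n V g \<Longrightarrow> g i j = g j i"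
  unfolding quantum_metric_def by blast

lemma quantum_metric_outside:
  "quantum_metric n V g \<Longrightarrow> n \<le> i \<or> n \<le> j \<Longrightarrow> g i j = 0"
  unfolding quantum_metric_def by blast

lemma sum_lessThan_4: "(\<Sum>k<4. f k) = f 0 + f 1 + f 2 + f (3::nat)"
  by (simp add: numeral_eq_Suc lessThan_Suc add.commute add.left_commute)

lemma all_less_4: "(\<forall>k<4. P k) \<longleftrightarrow> P 0 \<and> P 1 \<and> P 2 \<and> P (3::nat)"
  by (auto simp: numeral_eq_Suc less_Suc_eq)

lemma ex_less_4: "(\<exists>k<4. P k) \<longleftrightarrow> P 0 \<or> P 1 \<or> P 2 \<or> P (3::nat)"
  by (auto simp: numeral_eq_Suc less_Suc_eq)

definition anticirculant :: "nat \<Rightarrow> (nat \<Rightarrow> 'a::zero) \<Rightarrow> nat \<Rightarrow> nat \<Rightarrow> 'a" where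
  "anticirculant n f i j = (if i < n \<and> j < n then f ((i + j) mod n) else 0)"

lemma anticirculant_cong:
  "(\<And>k. k < n \<Longrightarrow> f k = f' k) \<Longrightarrow> anticirculant n f = anticirculant n f'"
  by (auto simp: anticirculant_def fun_eq_iff)

lemma anticirculant_symmetric: "anticirculant n f i j = anticirculant n f j i"
  by (simp add: anticirculant_def add.commute conj_commute)

lemma gZ4_eq_anticirculant: "gZ4 m = anticirculant 4 (\<lambda>k. if k = m then 1 else 0)"
  by (simp add: fun_eq_iff gZ4_def anticirculant_def)

lemma gZ4c_eq_anticirculant: "gZ4c m = anticirculant 4 (\<lambda>k. if k = m then 0 else 1)"
  by (simp add: fun_eq_iff gZ4c_def gZ4_def anticirculant_def)

lemma sum_VZ4:
  assumes "r < 4" "i < 4"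
  shows "(\<Sum>p<4. f p * VZ4 p r i) = f ((i + 4 - r) mod 4)"
proof -
  have "\<forall>r<4. \<forall>i<4. (\<Sum>p<4. f p * VZ4 p r i) = f ((i + 4 - r) mod 4)"
    by (simp add: all_less_4 sum_lessThan_4 VZ4_def)
  then show ?thesis
    using assms by blast
qed

lemma anticirculant_central_VZ4:
  assumes "r < 4" "i < 4" "j < 4"
  shows "(\<Sum>p<4. anticirculant 4 f p j * VZ4 p r i) = (\<Sum>q<4. anticirculant 4 f i q * VZ4 q r j)"
proof -
  have "i + 4 - r + j = i + (j + 4 - r)"
    using assms by simp
  then have "((i + 4 - r) mod 4 + j) mod 4 = (i + (j + 4 - r) mod 4) mod 4"
    by (metis mod_add_left_eq mod_add_right_eq)
  then show ?thesis
    using assms by (simp add: sum_VZ4 anticirculant_def)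
qed

lemma quantum_metric_VZ4_anticirculant:
  assumes "quantum_metric 4 VZ4 g"
  shows "g = anticirculant 4 (g 0)"
proof (intro ext)
  fix i j :: nat
  show "g i j = anticirculant 4 (g 0) i j"
  proof (cases "i < 4 \<and> j < 4")
    case True
    \<comment> \<open>centrality for x^i at column i + j gives g 0 (i + j) = g i j\<close>
    have "\<forall>i<4. \<forall>j<4. ((i + j) mod 4 + 4 - i) mod 4 = (j::nat)"
      by (simp add: all_less_4)
    with True have "g 0 ((i + j) mod 4) = g i j"
      using quantum_metric_central[OF assms, of i i "(i + j) mod 4"] by (simp add: sum_VZ4)
    with True show ?thesis
      by (simp add: anticirculant_def)
  next
    case False
    then show ?thesis
      using quantum_metric_outside[OF assms] by (auto simp: anticirculant_def)
  qed
qed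

lemma anticirculant_row_sum:
  assumes "k < 4"
  shows "(\<Sum>j<4. anticirculant 4 f k j) = (\<Sum>j<4. f j)"
proof -
  have "\<forall>k<4. (\<Sum>j<4. anticirculant 4 f k j) = (\<Sum>j<4. f j)"
    by (simp add: all_less_4 sum_lessThan_4 anticirculant_def) (simp add: eval_nat_numeral ac_simps)
  with assms show ?thesis
    by blast
qed

lemma quantum_metric_VZ4_anticirculant_sum_eq_1:
  assumes "quantum_metric 4 VZ4 (anticirculant 4 f)"
  shows "(\<Sum>k<4. f k) = 1"
proof (rule ccontr)
  assume "(\<Sum>k<4. f k) \<noteq> 1"
  then have "\<And>k. k < 4 \<Longrightarrow> (\<Sum>j<4. anticirculant 4 f k j * 1) = 0"
    by (simp add: anticirculant_row_sum)
  from quantum_metric_kernel_trivial[OF assms this, of 0] show False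
    by simp
qed

lemma bit_sum_4_eq_1_cases:
  fixes F :: "nat \<Rightarrow> bit"
  assumes "(\<Sum>k<4. F k) = 1"
  obtains m where "m < 4" "\<And>k. k < 4 \<Longrightarrow> F k = (if k = m then 1 else 0)"
    | m where "m < 4" "\<And>k. k < 4 \<Longrightarrow> F k = (if k = m then 0 else 1)"
proof -
  have "\<exists>m<4. (\<forall>k<4. F k = (if k = m then 1 else 0)) \<or> (\<forall>k<4. F k = (if k = m then 0 else 1))"
    using bit_zero_or_one[of "F 0"] bit_zero_or_one[of "F 1"] bit_zero_or_one[of "F 2"]
      bit_zero_or_one[of "F 3"] assms
    unfolding sum_lessThan_4 ex_less_4 all_less_4 by (elim disjE) simp_all
  with that show thesis
    by blast
qed

lemma quantum_metric_VZ4_cases: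
  assumes "quantum_metric 4 VZ4 g"
  shows "g \<in> gZ4 ` {0..<4} \<union> gZ4c ` {0..<4}"
proof -
  have g: "g = anticirculant 4 (g 0)"
    using assms by (rule quantum_metric_VZ4_anticirculant)
  from assms have "quantum_metric 4 VZ4 (anticirculant 4 (g 0))"
    by (simp only: g[symmetric])
  then have "(\<Sum>k<4. g 0 k) = 1"
    by (rule quantum_metric_VZ4_anticirculant_sum_eq_1)
  then show ?thesis
  proof (cases rule: bit_sum_4_eq_1_cases)
    case (1 m)
    then have "anticirculant 4 (g 0) = gZ4 m"
      unfolding gZ4_eq_anticirculant by (intro anticirculant_cong) simp
    with g have "g = gZ4 m"
      by (rule trans)
    with \<open>m < 4\<close> show ?thesis
      by simp
  next
    case (2 m)
    then have "anticirculant 4 (g 0) = gZ4c m"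
      unfolding gZ4c_eq_anticirculant by (intro anticirculant_cong) simp
    with g have "g = gZ4c m"
      by (rule trans)
    with \<open>m < 4\<close> show ?thesis
      by simp
  qed
qed

lemma quantum_metric_VZ4_anticirculantI:
  assumes "\<forall>i<4. \<forall>j<4.
    (\<Sum>k<4. anticirculant 4 f i k * anticirculant 4 f k j) = (if i = j then 1 else 0)"
  shows "quantum_metric 4 VZ4 (anticirculant 4 f)"
proof (rule quantum_metricI[where h = "anticirculant 4 f"])
  show "\<And>i j. 4 \<le> i \<or> 4 \<le> j \<Longrightarrow> anticirculant 4 f i j = 0"
    by (auto simp: anticirculant_def)
  show "\<And>i j. anticirculant 4 f i j = anticirculant 4 f j i"
    by (rule anticirculant_symmetric)
  show "\<And>r i j. r < 4 \<Longrightarrow> i < 4 \<Longrightarrow> j < 4 \<Longrightarrow>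
      (\<Sum>p<4. anticirculant 4 f p j * VZ4 p r i) = (\<Sum>q<4. anticirculant 4 f i q * VZ4 q r j)"
    by (rule anticirculant_central_VZ4)
qed (use assms in auto)

lemma quantum_metric_gZ4: "m < 4 \<Longrightarrow> quantum_metric 4 VZ4 (gZ4 m)"
  unfolding gZ4_eq_anticirculant
  by (rule quantum_metric_VZ4_anticirculantI) (simp add: all_less_4 sum_lessThan_4 anticirculant_def)

lemma quantum_metric_gZ4c: "m < 4 \<Longrightarrow> quantum_metric 4 VZ4 (gZ4c m)"
  unfolding gZ4c_eq_anticirculant
  by (rule quantum_metric_VZ4_anticirculantI) (simp add: all_less_4 sum_lessThan_4 anticirculant_def)

lemma quantum_metrics_VZ4: "{g. quantum_metric 4 VZ4 g} = gZ4 ` {0..<4} \<union> gZ4c ` {0..<4}"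
  using quantum_metric_VZ4_cases quantum_metric_gZ4 quantum_metric_gZ4c by auto

lemma card_gZ4_gZ4c: "card (gZ4 ` {0..<4} \<union> gZ4c ` {0..<4}) = 8"
proof -
  have "inj_on gZ4 {0..<4}"
  proof (rule inj_onI)
    fix a b assume "a \<in> {0..<4}" "gZ4 a = gZ4 b"
    then have "a < 4" "gZ4 a 0 a = gZ4 b 0 a"
      by simp_all
    then show "a = b"
      by (simp add: gZ4_def split: if_splits)
  qed
  moreover have "inj_on gZ4c {0..<4}"
  proof (rule inj_onI)
    fix a b assume "a \<in> {0..<4}" "gZ4c a = gZ4c b"
    then have "a < 4" "gZ4c a 0 a = gZ4c b 0 a"
      by simp_all
    then show "a = b"
      by (simp add: gZ4c_def gZ4_def split: if_splits)
  qed
  moreover have "gZ4 a \<noteq> gZ4c b" for a b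
  proof -
    obtain k where "k < 4" "k \<noteq> a" "k \<noteq> b"
      using ex_less_4[of "\<lambda>k. k \<noteq> a \<and> k \<noteq> b"] by auto
    then have "gZ4 a 0 k \<noteq> gZ4c b 0 k"
      by (simp add: gZ4c_def gZ4_def)
    then show ?thesis
      by auto
  qed
  ultimately show ?thesis
    by (subst card_Un_disjoint) (auto simp: card_image)
qed

definition mat4 :: "'a list list \<Rightarrow> nat \<Rightarrow> nat \<Rightarrow> 'a::zero" where
  "mat4 L i j = (if i < 4 \<and> j < 4 then L ! i ! j else 0)"

definition metricA2 :: "bit \<Rightarrow> bit \<Rightarrow> bit \<Rightarrow> bit \<Rightarrow> nat \<Rightarrow> nat \<Rightarrow> bit" where
  "metricA2 a b c d = mat4 [[a, 0, 0, a], [0, b, c, d], [0, c, d, b], [a, d, b, a + c]]"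

lemma quantum_metric_VA2_form:
  assumes "quantum_metric 4 VA2 g"
  shows "g = metricA2 (g 0 0) (g 1 1) (g 1 2) (g 2 2)"
proof -
  note central = quantum_metric_central[OF assms]
  have "g 0 1 = 0"
    using central[of 1 0 2] by (simp add: sum_lessThan_4 VA2_def bit_add_eq_0_iff)
  moreover have "g 0 2 = 0"
    using central[of 1 0 3] by (simp add: sum_lessThan_4 VA2_def bit_add_eq_0_iff)
  moreover have "g 0 3 = g 0 0"
    using central[of 1 0 1] by (simp add: sum_lessThan_4 VA2_def bit_add_eq_0_iff)
  moreover have "g 2 3 = g 1 1"
    using central[of 2 1 3] by (simp add: sum_lessThan_4 VA2_def bit_add_eq_0_iff)
  moreover have "g 1 3 = g 2 2"
    using central[of 1 2 3] by (simp add: sum_lessThan_4 VA2_def bit_add_eq_0_iff)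
  moreover have "g 3 3 = g 0 0 + g 1 2"
  proof -
    have "g 0 3 + g 3 3 = g 1 2"
      using central[of 1 1 3] by (simp add: sum_lessThan_4 VA2_def)
    with \<open>g 0 3 = g 0 0\<close> show ?thesis
      using bit_zero_or_one[of "g 0 0"] bit_zero_or_one[of "g 3 3"] by (elim disjE) simp_all
  qed
  moreover note quantum_metric_symmetric[OF assms, of 1 0] quantum_metric_symmetric[OF assms, of 2 0]
    quantum_metric_symmetric[OF assms, of 3 0] quantum_metric_symmetric[OF assms, of 2 1]
    quantum_metric_symmetric[OF assms, of 3 1] quantum_metric_symmetric[OF assms, of 3 2]
  ultimately have entries: "\<forall>i<4. \<forall>j<4. g i j = metricA2 (g 0 0) (g 1 1) (g 1 2) (g 2 2) i j"
    by (simp add: all_less_4 metricA2_def mat4_def)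
  show ?thesis
  proof (intro ext)
    fix i j :: nat
    show "g i j = metricA2 (g 0 0) (g 1 1) (g 1 2) (g 2 2) i j"
    proof (cases "i < 4 \<and> j < 4")
      case True
      with entries show ?thesis
        by blast
    next
      case False
      then show ?thesis
        using quantum_metric_outside[OF assms] by (auto simp: metricA2_def mat4_def)
    qed
  qed
qed

lemma metricA2_nonsingular_cases:
  assumes kernel: "\<And>v i. \<forall>k<4. (\<Sum>j<4. metricA2 a b c d k j * v j) = 0 \<Longrightarrow> i < 4 \<Longrightarrow> v i = 0"
  shows "(a, b, c, d) \<in> {(1, 0, 0, 1), (1, 0, 1, 0), (1, 1, 0, 0)}"
proof -
  have "a = 1"
  proof (rule ccontr)
    assume "a \<noteq> 1"
    then have "\<forall>k<4. (\<Sum>j<4. metricA2 a b c d k j * (if j = 0 then 1 else 0)) = 0"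
      by (simp add: all_less_4 sum_lessThan_4 metricA2_def mat4_def)
    from kernel[OF this, of 0] show False
      by simp
  qed
  have "b + c + d = 1"
  proof (rule ccontr)
    assume "b + c + d \<noteq> 1"
    then have "\<forall>k<4. (\<Sum>j<4. metricA2 a b c d k j * 1) = 0"
      using \<open>a = 1\<close> bit_zero_or_one[of b] bit_zero_or_one[of c] bit_zero_or_one[of d]
      by (elim disjE) (simp_all add: all_less_4 sum_lessThan_4 metricA2_def mat4_def)
    from kernel[OF this, of 0] show False
      by simp
  qed
  have "\<not> (b = 1 \<and> c = 1 \<and> d = 1)"
  proof
    assume "b = 1 \<and> c = 1 \<and> d = 1"
    then have "\<forall>k<4. (\<Sum>j<4. metricA2 a b c d k j * (if j = 1 \<or> j = 2 then 1 else 0)) = 0"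
      by (simp add: all_less_4 sum_lessThan_4 metricA2_def mat4_def)
    from kernel[OF this, of 1] show False
      by simp
  qed
  with \<open>a = 1\<close> \<open>b + c + d = 1\<close> show ?thesis
    using bit_zero_or_one[of b] bit_zero_or_one[of c] bit_zero_or_one[of d]
    by (elim disjE) simp_all
qed

lemma quantum_metric_mat4I:
  assumes "\<forall>i<4. \<forall>j<4. L ! i ! j = L ! j ! i"
    and "\<forall>i<4. \<forall>j<4. (\<Sum>k<4. mat4 L i k * mat4 H k j) = (if i = j then 1 else 0)"
    and "\<forall>i<4. \<forall>j<4. (\<Sum>k<4. mat4 H i k * mat4 L k j) = (if i = j then 1 else 0)"
    and "\<forall>r<4. \<forall>i<4. \<forall>j<4. (\<Sum>p<4. mat4 L p j * V p r i) = (\<Sum>q<4. mat4 L i q * V q r j)"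
  shows "quantum_metric 4 V (mat4 L)"
proof (rule quantum_metricI[where h = "mat4 H"])
  show "\<And>i j. 4 \<le> i \<or> 4 \<le> j \<Longrightarrow> mat4 L i j = 0"
    by (auto simp: mat4_def)
  show "\<And>i j. mat4 L i j = mat4 L j i"
    using assms(1) by (simp add: mat4_def)
qed (use assms(2-4) in blast)+

lemma quantum_metric_metricA2:
  assumes "(a, b, c, d) \<in> {(1, 0, 0, 1), (1, 0, 1, 0), (1, 1, 0, 0)}"
  shows "quantum_metric 4 VA2 (metricA2 a b c d)"
proof -
  from assms consider "a = 1" "b = 0" "c = 0" "d = 1" | "a = 1" "b = 0" "c = 1" "d = 0"
    | "a = 1" "b = 1" "c = 0" "d = 0"
    by auto
  then show ?thesis
  proof cases
    case 1
    show ?thesis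
      unfolding metricA2_def 1
      by (rule quantum_metric_mat4I[where H = "[[1, 1, 0, 0], [1, 0, 0, 1], [0, 0, 1, 0], [0, 1, 0, 0]]"])
        (simp_all add: all_less_4 sum_lessThan_4 mat4_def VA2_def)
  next
    case 2
    show ?thesis
      unfolding metricA2_def 2
      by (rule quantum_metric_mat4I[where H = "[[0, 0, 0, 1], [0, 0, 1, 0], [0, 1, 0, 0], [1, 0, 0, 1]]"])
        (simp_all add: all_less_4 sum_lessThan_4 mat4_def VA2_def)
  next
    case 3
    show ?thesis
      unfolding metricA2_def 3
      by (rule quantum_metric_mat4I[where H = "[[1, 0, 1, 0], [0, 1, 0, 0], [1, 0, 0, 1], [0, 0, 1, 0]]"])
        (simp_all add: all_less_4 sum_lessThan_4 mat4_def VA2_def)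
  qed
qed

lemma quantum_metrics_VA2:
  "{g. quantum_metric 4 VA2 g}
     = (\<lambda>(a, b, c, d). metricA2 a b c d) ` {(1, 0, 0, 1), (1, 0, 1, 0), (1, 1, 0, 0)}"
proof (intro equalityI subsetI)
  fix g assume "g \<in> {g. quantum_metric 4 VA2 g}"
  then have g: "quantum_metric 4 VA2 g"
    by simp
  have "(g 0 0, g 1 1, g 1 2, g 2 2) \<in> {(1, 0, 0, 1), (1, 0, 1, 0), (1, 1, 0, 0)}"
  proof (rule metricA2_nonsingular_cases)
    fix v :: "nat \<Rightarrow> bit" and i :: nat
    assume "\<forall>k<4. (\<Sum>j<4. metricA2 (g 0 0) (g 1 1) (g 1 2) (g 2 2) k j * v j) = 0" "i < 4"
    then show "v i = 0"
      using quantum_metric_kernel_trivial[OF g] by (simp only: quantum_metric_VA2_form[OF g, symmetric])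
  qed
  then show "g \<in> (\<lambda>(a, b, c, d). metricA2 a b c d) ` {(1, 0, 0, 1), (1, 0, 1, 0), (1, 1, 0, 0)}"
    by (subst quantum_metric_VA2_form[OF g]) (rule image_eqI[where x = "(g 0 0, g 1 1, g 1 2, g 2 2)"], simp_all)
next
  fix g assume "g \<in> (\<lambda>(a, b, c, d). metricA2 a b c d) ` {(1, 0, 0, 1), (1, 0, 1, 0), (1, 1, 0, 0)}"
  then show "g \<in> {g. quantum_metric 4 VA2 g}"
    using quantum_metric_metricA2 by auto
qed

lemma inj_metricA2: "inj (\<lambda>(a, b, c, d). metricA2 a b c d)"
  by (rule inj_on_inverseI[where g = "\<lambda>M. (M 0 0, M 1 1, M 1 2, M 2 2)"])
    (auto simp: metricA2_def mat4_def)

lemma card_quantum_metrics_VA2: "card {g. quantum_metric 4 VA2 g} = 3"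
  unfolding quantum_metrics_VA2 by (subst card_image[OF inj_on_subset[OF inj_metricA2 subset_UNIV]]) simp

theorem mainTheorem11:
  shows "{g. quantum_metric 4 VZ4 g} = gZ4 ` {0..<4} \<union> gZ4c ` {0..<4}
       \<and> card {g. quantum_metric 4 VZ4 g} = 8
       \<and> card {g. quantum_metric 4 VA2 g} = 3"
  using quantum_metrics_VZ4 card_gZ4_gZ4c card_quantum_metrics_VA2 by simp

end
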